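(* Let $(\Omega,\Sigma,\mathbb{P}_0)$ be a probability space, $\mathbb{L}^2=\mathbb{L}^2(\Omega,\Sigma,\mathbb{P}_0)$, and $n\ge 2$ an integer. Then $\mathrm{MAXVAR}_n$ is an averse risk measure, i.e. it satisfies: (A1) $\mathrm{MAXVAR}_n(C)=C$ for every constant $C$; (A2) $\mathrm{MAXVAR}_n(\lambda X+(1-\lambda)Y)\le \lambda\,\mathrm{MAXVAR}_n(X)+(1-\lambda)\,\mathrm{MAXVAR}_n(Y)$ for all $X,Y\in\mathbb{L}^2$, $\lambda\in[0,1]$; (A4) if $\|X^k-X\|_2\to0$ and $\mathrm{MAXVAR}_n(X^k)\le 0$ for all $k$, then $\mathrm{MAXVAR}_n(X)\le0$; (A5) $\mathrm{MAXVAR}_n(\lambda X)=\lambda\,\mathrm{MAXVAR}_n(X)$ for all $\lambda>0$, $X\in\mathbb{L}^2$; (A6) $\mathrm{MAXVAR}_n(X)>\mathbb{E}(X)$ for every non-constant $X\in\mathbb{L}^2$.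
   Context: For $X\in\mathbb{L}^2$, $\mathrm{MAXVAR}_n(X)=\mathbb{E}(\max\{X_1,\dots,X_n\})$, where $X_1,\dots,X_n$ are independent random variables each with the same distribution as $X$ (the value depends only on the distribution of $X$). "Non-constant" means not almost surely equal to a constant. *)

theory Defs
  imports "HOL-Probability.Probability"
begin

definition L2 :: "'a measure \<Rightarrow> ('a \<Rightarrow> real) set" where
  "L2 M = {X. X \<in> borel_measurable M \<and> integrable M (\<lambda>w. (X w)^2)}"

text \<open>MAXVAR_n(X) = E(max(X_1,...,X_n)) with X_i iid copies of X: computed on the
  product of n copies of the distribution of X.\<close>
definition MAXVAR :: "nat \<Rightarrow> 'a measure \<Rightarrow> ('a \<Rightarrow> real) \<Rightarrow> real" where
  "MAXVAR n M X = integral\<^sup>L (PiM {..<n} (\<lambda>_. distr M borel X)) (\<lambda>x. Max (x ` {..<n}))"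

end

theory Submission
  imports Defs
begin

text \<open>Realise the \<open>n\<close> independent copies of \<open>X\<close> as the coordinates \<open>X (\<omega> i)\<close> on the product
  \<open>M\<^sup>n\<close>, so that \<open>MAXVAR\<close> is the expectation of a pointwise maximum. The value on constants,
  convexity and positive homogeneity are then inherited from the pointwise maximum;
  since \<open>max\<close> is 1-Lipschitz in each coordinate, \<open>MAXVAR\<close> is \<open>n\<close>-Lipschitz for the
  \<open>L\<^sup>1\<close>-distance, hence \<open>L\<^sup>2\<close>-continuous; and for \<open>n \<ge> 2\<close>
  \<open>MAXVAR X \<ge> E max(X\<^sub>0, X\<^sub>1) = E X + E\<bar>X\<^sub>0 - X\<^sub>1\<bar> / 2\<close>, where
  \<open>E (X\<^sub>0 - X\<^sub>1)\<^sup>2 = 2 Var X > 0\<close> for non-constant \<open>X\<close>.\<close>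

lemma Max_convex_comb_le:
  fixes a b :: "'i \<Rightarrow> real"
  assumes "finite I" "I \<noteq> {}" "0 \<le> l" "l \<le> 1"
  shows "Max ((\<lambda>i. l * a i + (1 - l) * b i) ` I) \<le> l * Max (a ` I) + (1 - l) * Max (b ` I)"
proof -
  have "l * a i + (1 - l) * b i \<le> l * Max (a ` I) + (1 - l) * Max (b ` I)" if "i \<in> I" for i
  proof -
    have "a i \<le> Max (a ` I)" "b i \<le> Max (b ` I)" using that assms by auto
    then show ?thesis using assms by (intro add_mono mult_left_mono) auto
  qed
  then show ?thesis using assms by (subst Max_le_iff) auto
qed

lemma Max_diff_le_sum_abs:
  fixes f g :: "'i \<Rightarrow> real"
  assumes "finite I" "I \<noteq> {}"
  shows "Max (f ` I) - Max (g ` I) \<le> (\<Sum>i\<in>I. \<bar>f i - g i\<bar>)"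
proof -
  have "Max (f ` I) \<in> f ` I" using assms by simp
  then obtain i where i: "i \<in> I" "Max (f ` I) = f i" by auto
  have "g i \<le> Max (g ` I)" using i assms by auto
  moreover have "\<bar>f i - g i\<bar> \<le> (\<Sum>i\<in>I. \<bar>f i - g i\<bar>)"
    by (rule member_le_sum) (use i assms in auto)
  ultimately show ?thesis using i by linarith
qed

lemma abs_Max_le_sum_abs:
  fixes f :: "'i \<Rightarrow> real"
  assumes "finite I" "I \<noteq> {}"
  shows "\<bar>Max (f ` I)\<bar> \<le> (\<Sum>i\<in>I. \<bar>f i\<bar>)"
  using Max_diff_le_sum_abs[OF assms, of f "\<lambda>_. 0"] Max_diff_le_sum_abs[OF assms, of "\<lambda>_. 0" f] assms
  by (simp add: abs_le_iff)

lemma square_integrable_diff: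
  fixes f g :: "'a \<Rightarrow> real"
  assumes [measurable]: "f \<in> borel_measurable M" "g \<in> borel_measurable M"
    and "integrable M (\<lambda>x. (f x)\<^sup>2)" "integrable M (\<lambda>x. (g x)\<^sup>2)"
  shows "integrable M (\<lambda>x. (f x - g x)\<^sup>2)"
proof (rule Bochner_Integration.integrable_bound)
  show "integrable M (\<lambda>x. 2 * (f x)\<^sup>2 + 2 * (g x)\<^sup>2)" using assms by auto
  have "(a - b)\<^sup>2 \<le> 2 * a\<^sup>2 + 2 * b\<^sup>2" for a b :: real
    using zero_le_power2[of "a + b"] by (simp add: power2_diff power2_sum)
  then show "AE x in M. norm ((f x - g x)\<^sup>2) \<le> norm (2 * (f x)\<^sup>2 + 2 * (g x)\<^sup>2)"
    by (auto intro!: AE_I2)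
qed measurable

lemma borel_measurable_Max_components:
  fixes X :: "'a \<Rightarrow> real"
  assumes "finite I" and [measurable]: "X \<in> borel_measurable M"
  shows "(\<lambda>\<omega>. Max ((\<lambda>i. X (\<omega> i)) ` I)) \<in> borel_measurable (PiM I (\<lambda>_. M))"
proof (rule borel_measurable_Max[OF \<open>finite I\<close>])
  fix i assume "i \<in> I"
  then have "(\<lambda>\<omega>. \<omega> i) \<in> measurable (PiM I (\<lambda>_. M)) M"
    by (rule measurable_component_singleton)
  then show "(\<lambda>\<omega>. X (\<omega> i)) \<in> borel_measurable (PiM I (\<lambda>_. M))"
    by measurable
qed

context prob_space
begin

lemma L2_integrable: "X \<in> L2 M \<Longrightarrow> integrable M X"
  by (auto simp: L2_def intro: square_integrable_imp_integrable)

lemma expectation_abs_le_sqrt_second_moment: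
  fixes f :: "'a \<Rightarrow> real"
  assumes [measurable]: "f \<in> borel_measurable M" and "integrable M (\<lambda>x. (f x)\<^sup>2)"
  shows "expectation (\<lambda>x. \<bar>f x\<bar>) \<le> sqrt (expectation (\<lambda>x. (f x)\<^sup>2))"
proof -
  have "integrable M (\<lambda>x. \<bar>f x\<bar>)"
    using square_integrable_imp_integrable[OF _ assms(2)] by auto
  then have "0 \<le> expectation (\<lambda>x. (f x)\<^sup>2) - (expectation (\<lambda>x. \<bar>f x\<bar>))\<^sup>2"
    using variance_positive[of "\<lambda>x. \<bar>f x\<bar>"] assms by (simp add: variance_eq)
  then show ?thesis by (simp add: real_le_rsqrt)
qed

lemma variance_pos_if_not_AE_const:
  fixes X :: "'a \<Rightarrow> real"
  assumes "integrable M X" "integrable M (\<lambda>x. (X x)\<^sup>2)" and nonconst: "\<nexists>c. AE x in M. X x = c"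
  shows "0 < variance X"
proof -
  have "integrable M (\<lambda>x. (X x - expectation X)\<^sup>2)"
    using assms by (simp add: power2_diff)
  moreover have "\<not> (AE x in M. (X x - expectation X)\<^sup>2 = 0)"
    using nonconst by auto
  ultimately have "variance X \<noteq> 0"
    by (subst integral_nonneg_eq_0_iff_AE) auto
  then show ?thesis using variance_positive[of X] by linarith
qed

lemma
  fixes f :: "'a \<Rightarrow> real"
  assumes "i \<in> I" and [measurable]: "f \<in> borel_measurable M"
  shows integral_PiM_component: "(\<integral>\<omega>. f (\<omega> i) \<partial>PiM I (\<lambda>_. M)) = expectation f"
    and integrable_PiM_component_iff: "integrable (PiM I (\<lambda>_. M)) (\<lambda>\<omega>. f (\<omega> i)) \<longleftrightarrow> integrable M f"
proof -
  have component: "(\<lambda>\<omega>. \<omega> i) \<in> measurable (PiM I (\<lambda>_. M)) M"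
    using assms by (intro measurable_component_singleton)
  have distr_component: "distr (PiM I (\<lambda>_. M)) M (\<lambda>\<omega>. \<omega> i) = M"
    using distr_PiM_component[of I "\<lambda>_. M" i] assms prob_space_axioms by auto
  show "(\<integral>\<omega>. f (\<omega> i) \<partial>PiM I (\<lambda>_. M)) = expectation f"
    using integral_distr[OF component, of f] by (simp add: distr_component)
  show "integrable (PiM I (\<lambda>_. M)) (\<lambda>\<omega>. f (\<omega> i)) \<longleftrightarrow> integrable M f"
    using integrable_distr_eq[OF component, of f] by (simp add: distr_component)
qed

lemma
  fixes f g :: "'a \<Rightarrow> real"
  assumes "finite I" "i \<in> I" "j \<in> I" "i \<noteq> j" and "integrable M f" "integrable M g"
  shows integral_PiM_components_mult:
      "(\<integral>\<omega>. f (\<omega> i) * g (\<omega> j) \<partial>PiM I (\<lambda>_. M)) = expectation f * expectation g"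
    and integrable_PiM_components_mult:
      "integrable (PiM I (\<lambda>_. M)) (\<lambda>\<omega>. f (\<omega> i) * g (\<omega> j))"
proof -
  have product: "product_sigma_finite (\<lambda>_. M)"
    by (simp add: product_sigma_finite_def sigma_finite_measure_axioms)
  define F where "F k = (if k = i then f else if k = j then g else (\<lambda>_. 1))" for k
  have F_integrable: "integrable M (F k)" for k
    using assms by (simp add: F_def)
  have "(\<Prod>k\<in>I. h k) = h i * h j" if "\<And>k. k \<notin> {i, j} \<Longrightarrow> h k = 1" for h :: "_ \<Rightarrow> real"
    using that assms by (subst prod.mono_neutral_right[of I "{i, j}"]) auto
  then have "(\<Prod>k\<in>I. F k (\<omega> k)) = f (\<omega> i) * g (\<omega> j)"
    and "(\<Prod>k\<in>I. expectation (F k)) = expectation f * expectation g" for \<omega>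
    using assms by (auto simp: F_def prob_space)
  then show "(\<integral>\<omega>. f (\<omega> i) * g (\<omega> j) \<partial>PiM I (\<lambda>_. M)) = expectation f * expectation g"
    and "integrable (PiM I (\<lambda>_. M)) (\<lambda>\<omega>. f (\<omega> i) * g (\<omega> j))"
    using product_sigma_finite.product_integral_prod[OF product \<open>finite I\<close>, of F]
      product_sigma_finite.product_integrable_prod[OF product \<open>finite I\<close>, of F]
      F_integrable by simp_all
qed

lemma integral_PiM_square_diff_components:
  fixes X :: "'a \<Rightarrow> real"
  assumes "finite I" "i \<in> I" "j \<in> I" "i \<noteq> j"
    and [measurable]: "X \<in> borel_measurable M" and "integrable M (\<lambda>x. (X x)\<^sup>2)"
  shows "(\<integral>\<omega>. (X (\<omega> i) - X (\<omega> j))\<^sup>2 \<partial>PiM I (\<lambda>_. M)) = 2 * variance X"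
    and "integrable (PiM I (\<lambda>_. M)) (\<lambda>\<omega>. (X (\<omega> i) - X (\<omega> j))\<^sup>2)"
proof -
  have X_integrable: "integrable M X"
    using square_integrable_imp_integrable[OF assms(5,6)] .
  have "integrable (PiM I (\<lambda>_. M)) (\<lambda>\<omega>. (X (\<omega> k))\<^sup>2)"
    and "(\<integral>\<omega>. (X (\<omega> k))\<^sup>2 \<partial>PiM I (\<lambda>_. M)) = expectation (\<lambda>x. (X x)\<^sup>2)" if "k \<in> I" for k
    using that assms integral_PiM_component[of k I "\<lambda>x. (X x)\<^sup>2"]
      integrable_PiM_component_iff[of k I "\<lambda>x. (X x)\<^sup>2"] by auto
  moreover have "(X (\<omega> i) - X (\<omega> j))\<^sup>2 = (X (\<omega> i))\<^sup>2 + (X (\<omega> j))\<^sup>2 - 2 * (X (\<omega> i) * X (\<omega> j))"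
    for \<omega> by (simp add: power2_diff)
  ultimately show "(\<integral>\<omega>. (X (\<omega> i) - X (\<omega> j))\<^sup>2 \<partial>PiM I (\<lambda>_. M)) = 2 * variance X"
    and "integrable (PiM I (\<lambda>_. M)) (\<lambda>\<omega>. (X (\<omega> i) - X (\<omega> j))\<^sup>2)"
    using assms X_integrable integral_PiM_components_mult[OF assms(1-4) X_integrable X_integrable]
      integrable_PiM_components_mult[OF assms(1-4) X_integrable X_integrable]
    by (simp_all add: variance_eq power2_eq_square[of "expectation X"])
qed

lemma integral_PiM_abs_diff_components_pos:
  fixes X :: "'a \<Rightarrow> real"
  assumes "finite I" "i \<in> I" "j \<in> I" "i \<noteq> j"
    and [measurable]: "X \<in> borel_measurable M" and "integrable M (\<lambda>x. (X x)\<^sup>2)"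
    and nonconst: "\<nexists>c. AE x in M. X x = c"
  shows "0 < (\<integral>\<omega>. \<bar>X (\<omega> i) - X (\<omega> j)\<bar> \<partial>PiM I (\<lambda>_. M))"
proof -
  let ?P = "PiM I (\<lambda>_. M)"
  let ?D = "\<lambda>\<omega>. X (\<omega> i) - X (\<omega> j)"
  have X_integrable: "integrable M X"
    using square_integrable_imp_integrable[OF assms(5,6)] .
  have D_integrable: "integrable ?P (\<lambda>\<omega>. \<bar>?D \<omega>\<bar>)"
    using assms X_integrable integrable_PiM_component_iff[of _ I X] by auto
  note square_D = integral_PiM_square_diff_components[OF assms(1-6)]
  have "0 < (\<integral>\<omega>. (?D \<omega>)\<^sup>2 \<partial>?P)"
    using square_D variance_pos_if_not_AE_const[OF X_integrable assms(6) nonconst] by simp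
  then have "\<not> (AE \<omega> in ?P. \<bar>?D \<omega>\<bar> = 0)"
  proof (rule contrapos_pn)
    assume "AE \<omega> in ?P. \<bar>?D \<omega>\<bar> = 0"
    then have "(\<integral>\<omega>. (?D \<omega>)\<^sup>2 \<partial>?P) = (\<integral>\<omega>. 0 \<partial>?P)"
      using borel_measurable_integrable[OF square_D(2)] by (intro integral_cong_AE) auto
    then show "\<not> 0 < (\<integral>\<omega>. (?D \<omega>)\<^sup>2 \<partial>?P)" by simp
  qed
  then show ?thesis
    using integral_nonneg_eq_0_iff_AE[OF D_integrable] integral_nonneg_AE[of "\<lambda>\<omega>. \<bar>?D \<omega>\<bar>" ?P]
    by (auto simp: order_less_le)
qed

lemma integrable_Max_components:
  fixes X :: "'a \<Rightarrow> real"
  assumes "finite I" "I \<noteq> {}" and [measurable]: "X \<in> borel_measurable M" and "integrable M X"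
  shows "integrable (PiM I (\<lambda>_. M)) (\<lambda>\<omega>. Max ((\<lambda>i. X (\<omega> i)) ` I))"
proof (rule Bochner_Integration.integrable_bound)
  show "integrable (PiM I (\<lambda>_. M)) (\<lambda>\<omega>. \<Sum>i\<in>I. \<bar>X (\<omega> i)\<bar>)"
    using assms integrable_PiM_component_iff[of _ I "\<lambda>x. \<bar>X x\<bar>"] by auto
  show "AE \<omega> in PiM I (\<lambda>_. M). norm (Max ((\<lambda>i. X (\<omega> i)) ` I)) \<le> norm (\<Sum>i\<in>I. \<bar>X (\<omega> i)\<bar>)"
    using abs_Max_le_sum_abs[OF assms(1,2)] by (auto intro!: AE_I2)
qed (rule borel_measurable_Max_components[OF assms(1,3)])

lemma MAXVAR_eq_integral_PiM:
  fixes X :: "'a \<Rightarrow> real"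
  assumes X[measurable]: "X \<in> borel_measurable M"
  shows "MAXVAR n M X = (\<integral>\<omega>. Max ((\<lambda>i. X (\<omega> i)) ` {..<n}) \<partial>PiM {..<n} (\<lambda>_. M))"
proof -
  define D where "D = distr M borel X"
  have D_prob: "prob_space D" unfolding D_def by (rule prob_space_distr[OF X])
  have sets_D: "sets D = sets borel" by (simp add: D_def)
  have X_D: "X \<in> measurable M D" using X by (simp add: measurable_cong_sets[OF refl sets_D])
  have "distr (PiM {..<n} (\<lambda>_. M)) (PiM {..<n} (\<lambda>_. D)) (compose {..<n} X)
      = PiM {..<n} (\<lambda>i. distr M D X)"
    by (rule distr_PiM_finite_prob_space') (use prob_space_axioms D_prob X_D in auto)
  also have "distr M D X = D" unfolding D_def by (rule distr_cong) auto
  finally have distr_compose: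
    "distr (PiM {..<n} (\<lambda>_. M)) (PiM {..<n} (\<lambda>_. D)) (compose {..<n} X) = PiM {..<n} (\<lambda>_. D)" .
  have compose_measurable: "compose {..<n} X \<in> measurable (PiM {..<n} (\<lambda>_. M)) (PiM {..<n} (\<lambda>_. D))"
    unfolding compose_def
  proof (rule measurable_restrict)
    fix i :: nat assume "i \<in> {..<n}"
    then have "(\<lambda>\<omega>. \<omega> i) \<in> measurable (PiM {..<n} (\<lambda>_. M)) M"
      by (rule measurable_component_singleton)
    then show "(\<lambda>\<omega>. X (\<omega> i)) \<in> measurable (PiM {..<n} (\<lambda>_. M)) D"
      using X_D by (rule measurable_compose)
  qed
  have Max_measurable: "(\<lambda>x. Max (x ` {..<n})) \<in> borel_measurable (PiM {..<n} (\<lambda>_. D))"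
  proof -
    have "(\<lambda>x::real. x) \<in> borel_measurable D"
      by (simp add: measurable_cong_sets[OF sets_D refl])
    then show ?thesis
      using borel_measurable_Max_components[of "{..<n}" "\<lambda>x. x" D] by simp
  qed
  have "MAXVAR n M X = (\<integral>x. Max (x ` {..<n}) \<partial>PiM {..<n} (\<lambda>_. D))"
    by (simp add: MAXVAR_def D_def)
  also have "\<dots> = (\<integral>\<omega>. Max (compose {..<n} X \<omega> ` {..<n}) \<partial>PiM {..<n} (\<lambda>_. M))"
    using integral_distr[OF compose_measurable Max_measurable] by (simp add: distr_compose)
  also have "\<dots> = (\<integral>\<omega>. Max ((\<lambda>i. X (\<omega> i)) ` {..<n}) \<partial>PiM {..<n} (\<lambda>_. M))"
    by (intro Bochner_Integration.integral_cong refl arg_cong[where f=Max] image_cong)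
      (auto simp: compose_def)
  finally show ?thesis .
qed

lemma MAXVAR_const:
  assumes "0 < n"
  shows "MAXVAR n M (\<lambda>_. c) = c"
  using assms prob_space.prob_space[OF prob_space_PiM[of "{..<n}" "\<lambda>_. M"]] prob_space_axioms
  by (simp add: MAXVAR_eq_integral_PiM lessThan_empty_iff)

lemma MAXVAR_convex:
  fixes X Y :: "'a \<Rightarrow> real"
  assumes "0 < n" and [measurable]: "X \<in> borel_measurable M" "Y \<in> borel_measurable M"
    and "integrable M X" "integrable M Y" and "0 \<le> l" "l \<le> 1"
  shows "MAXVAR n M (\<lambda>x. l * X x + (1 - l) * Y x) \<le> l * MAXVAR n M X + (1 - l) * MAXVAR n M Y"
proof -
  let ?P = "PiM {..<n} (\<lambda>_. M)"
  have nonempty: "{..<n} \<noteq> {}" using assms by auto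
  note Max_integrable = integrable_Max_components[OF finite_lessThan nonempty]
  have "MAXVAR n M (\<lambda>x. l * X x + (1 - l) * Y x)
      = (\<integral>\<omega>. Max ((\<lambda>i. l * X (\<omega> i) + (1 - l) * Y (\<omega> i)) ` {..<n}) \<partial>?P)"
    by (simp add: MAXVAR_eq_integral_PiM)
  also have "\<dots> \<le> (\<integral>\<omega>. l * Max ((\<lambda>i. X (\<omega> i)) ` {..<n}) + (1 - l) * Max ((\<lambda>i. Y (\<omega> i)) ` {..<n}) \<partial>?P)"
    using assms Max_integrable[of "\<lambda>x. l * X x + (1 - l) * Y x"] Max_integrable[of X] Max_integrable[of Y]
    by (intro integral_mono Max_convex_comb_le[OF finite_lessThan nonempty]) auto
  also have "\<dots> = l * MAXVAR n M X + (1 - l) * MAXVAR n M Y"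
    using assms Max_integrable[of X] Max_integrable[of Y] by (simp add: MAXVAR_eq_integral_PiM)
  finally show ?thesis .
qed

lemma MAXVAR_mult:
  fixes X :: "'a \<Rightarrow> real"
  assumes "0 < n" "0 \<le> l" and [measurable]: "X \<in> borel_measurable M"
  shows "MAXVAR n M (\<lambda>x. l * X x) = l * MAXVAR n M X"
proof -
  have "Max ((\<lambda>i. l * X (\<omega> i)) ` {..<n}) = l * Max ((\<lambda>i. X (\<omega> i)) ` {..<n})" for \<omega>
    using mono_Max_commute[of "(*) l" "(\<lambda>i. X (\<omega> i)) ` {..<n}"] assms
    by (simp add: image_image mono_def mult_left_mono lessThan_empty_iff)
  then show ?thesis by (simp add: MAXVAR_eq_integral_PiM)
qed

lemma MAXVAR_diff_le:
  fixes X Y :: "'a \<Rightarrow> real"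
  assumes "0 < n" and [measurable]: "X \<in> borel_measurable M" "Y \<in> borel_measurable M"
    and "integrable M X" "integrable M Y"
  shows "MAXVAR n M X - MAXVAR n M Y \<le> n * expectation (\<lambda>x. \<bar>X x - Y x\<bar>)"
proof -
  let ?P = "PiM {..<n} (\<lambda>_. M)"
  have nonempty: "{..<n} \<noteq> {}" using assms by auto
  note Max_integrable = integrable_Max_components[OF finite_lessThan nonempty]
  have component_integrable: "integrable ?P (\<lambda>\<omega>. \<bar>X (\<omega> i) - Y (\<omega> i)\<bar>)" if "i < n" for i
    using that assms integrable_PiM_component_iff[of i "{..<n}" "\<lambda>x. \<bar>X x - Y x\<bar>"] by auto
  have "MAXVAR n M X - MAXVAR n M Y
      = (\<integral>\<omega>. Max ((\<lambda>i. X (\<omega> i)) ` {..<n}) - Max ((\<lambda>i. Y (\<omega> i)) ` {..<n}) \<partial>?P)"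
    using assms Max_integrable[of X] Max_integrable[of Y] by (simp add: MAXVAR_eq_integral_PiM)
  also have "\<dots> \<le> (\<integral>\<omega>. (\<Sum>i<n. \<bar>X (\<omega> i) - Y (\<omega> i)\<bar>) \<partial>?P)"
    using assms Max_integrable[of X] Max_integrable[of Y] component_integrable
    by (intro integral_mono Max_diff_le_sum_abs[OF finite_lessThan nonempty]) auto
  also have "\<dots> = (\<Sum>i<n. \<integral>\<omega>. \<bar>X (\<omega> i) - Y (\<omega> i)\<bar> \<partial>?P)"
    using component_integrable by (simp add: Bochner_Integration.integral_sum)
  also have "\<dots> = n * expectation (\<lambda>x. \<bar>X x - Y x\<bar>)"
    using integral_PiM_component[of _ "{..<n}" "\<lambda>x. \<bar>X x - Y x\<bar>"] by simp
  finally show ?thesis .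
qed

lemma MAXVAR_nonpos_if_L2_limit:
  assumes "0 < n" "X \<in> L2 M" "\<And>k. Xk k \<in> L2 M"
    and L2_limit: "(\<lambda>k. sqrt (expectation (\<lambda>x. (Xk k x - X x)\<^sup>2))) \<longlonglongrightarrow> 0"
    and nonpos: "\<And>k. MAXVAR n M (Xk k) \<le> 0"
  shows "MAXVAR n M X \<le> 0"
proof -
  have "MAXVAR n M X \<le> n * sqrt (expectation (\<lambda>x. (Xk k x - X x)\<^sup>2))" for k
  proof -
    have [measurable]: "X \<in> borel_measurable M" "Xk k \<in> borel_measurable M"
      using assms by (auto simp: L2_def)
    have "MAXVAR n M X \<le> MAXVAR n M X - MAXVAR n M (Xk k)" using nonpos[of k] by simp
    also have "\<dots> \<le> n * expectation (\<lambda>x. \<bar>Xk k x - X x\<bar>)"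
      using MAXVAR_diff_le[of n X "Xk k"] assms L2_integrable by (simp add: abs_minus_commute)
    also have "\<dots> \<le> n * sqrt (expectation (\<lambda>x. (Xk k x - X x)\<^sup>2))"
      using assms square_integrable_diff[of "Xk k" M X]
      by (intro mult_left_mono expectation_abs_le_sqrt_second_moment) (auto simp: L2_def)
    finally show ?thesis .
  qed
  then show ?thesis
    using LIMSEQ_le_const[OF tendsto_mult_right_zero[OF L2_limit, of "real n"]] by auto
qed

lemma MAXVAR_gt_expectation:
  fixes X :: "'a \<Rightarrow> real"
  assumes "2 \<le> n" and [measurable]: "X \<in> borel_measurable M"
    and "integrable M (\<lambda>x. (X x)\<^sup>2)" and nonconst: "\<nexists>c. AE x in M. X x = c"
  shows "expectation X < MAXVAR n M X"
proof -
  let ?P = "PiM {..<n} (\<lambda>_. M)"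
  let ?D = "\<lambda>\<omega>. X (\<omega> 0) - X (\<omega> 1)"
  have components: "0 \<in> {..<n}" "1 \<in> {..<n}" "(0::nat) \<noteq> 1" using assms by auto
  have X_integrable: "integrable M X"
    using square_integrable_imp_integrable[OF assms(2,3)] .
  have X_components: "integrable ?P (\<lambda>\<omega>. X (\<omega> i))" "(\<integral>\<omega>. X (\<omega> i) \<partial>?P) = expectation X"
    if "i \<in> {..<n}" for i
    using that X_integrable integral_PiM_component[OF that assms(2)]
      integrable_PiM_component_iff[OF that assms(2)] by auto
  have D_integrable: "integrable ?P (\<lambda>\<omega>. \<bar>?D \<omega>\<bar>)"
    using X_components[OF components(1)] X_components[OF components(2)] by auto
  have D_pos: "0 < (\<integral>\<omega>. \<bar>?D \<omega>\<bar> \<partial>?P)"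
    by (rule integral_PiM_abs_diff_components_pos[OF finite_lessThan components assms(2,3) nonconst])
  have "expectation X + (\<integral>\<omega>. \<bar>?D \<omega>\<bar> \<partial>?P) / 2
      = (\<integral>\<omega>. (X (\<omega> 0) + X (\<omega> 1)) / 2 + \<bar>?D \<omega>\<bar> / 2 \<partial>?P)"
    using X_components[OF components(1)] X_components[OF components(2)] D_integrable by simp
  also have "\<dots> \<le> (\<integral>\<omega>. Max ((\<lambda>i. X (\<omega> i)) ` {..<n}) \<partial>?P)"
  proof (rule integral_mono)
    show "integrable ?P (\<lambda>\<omega>. Max ((\<lambda>i. X (\<omega> i)) ` {..<n}))"
      using components by (intro integrable_Max_components X_integrable) auto
    show "(X (\<omega> 0) + X (\<omega> 1)) / 2 + \<bar>?D \<omega>\<bar> / 2 \<le> Max ((\<lambda>i. X (\<omega> i)) ` {..<n})" for \<omega>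
      using Max_ge[of "(\<lambda>i. X (\<omega> i)) ` {..<n}"] components by (auto simp: abs_if field_simps)
  qed (use X_components[OF components(1)] X_components[OF components(2)] D_integrable in auto)
  also have "\<dots> = MAXVAR n M X" by (simp add: MAXVAR_eq_integral_PiM)
  finally show ?thesis using D_pos by linarith
qed

end

theorem theorem2:
  fixes M :: "'a measure" and n :: nat
  assumes "prob_space M" and "n \<ge> 2"
  shows "(\<forall>C::real. MAXVAR n M (\<lambda>_. C) = C)
    \<and> (\<forall>X\<in>L2 M. \<forall>Y\<in>L2 M. \<forall>l::real. 0 \<le> l \<and> l \<le> 1 \<longrightarrow>
          MAXVAR n M (\<lambda>w. l * X w + (1 - l) * Y w)
            \<le> l * MAXVAR n M X + (1 - l) * MAXVAR n M Y)
    \<and> (\<forall>X\<in>L2 M. \<forall>Xk::nat \<Rightarrow> 'a \<Rightarrow> real. (\<forall>k. Xk k \<in> L2 M) \<and>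
          ((\<lambda>k. sqrt (integral\<^sup>L M (\<lambda>w. (Xk k w - X w)^2))) \<longlonglongrightarrow> 0) \<and>
          (\<forall>k. MAXVAR n M (Xk k) \<le> 0) \<longrightarrow> MAXVAR n M X \<le> 0)
    \<and> (\<forall>X\<in>L2 M. \<forall>l::real. l > 0 \<longrightarrow> MAXVAR n M (\<lambda>w. l * X w) = l * MAXVAR n M X)
    \<and> (\<forall>X\<in>L2 M. \<not> (\<exists>c. AE w in M. X w = c) \<longrightarrow>
          MAXVAR n M X > integral\<^sup>L M X)"
proof (intro conjI ballI allI impI)
  interpret prob_space M by fact
  have n: "0 < n" using assms(2) by simp
  have L2: "X \<in> borel_measurable M" "integrable M (\<lambda>x. (X x)\<^sup>2)" "integrable M X"
    if "X \<in> L2 M" for X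
    using that L2_integrable[OF that] unfolding L2_def by simp_all
  show "MAXVAR n M (\<lambda>_. C) = C" for C
    using MAXVAR_const[OF n] .
  show "MAXVAR n M (\<lambda>w. l * X w + (1 - l) * Y w) \<le> l * MAXVAR n M X + (1 - l) * MAXVAR n M Y"
    if "X \<in> L2 M" "Y \<in> L2 M" "0 \<le> l \<and> l \<le> 1" for X Y and l :: real
    using that L2 by (intro MAXVAR_convex[OF n]) auto
  show "MAXVAR n M X \<le> 0"
    if "X \<in> L2 M" and "(\<forall>k. Xk k \<in> L2 M) \<and>
          (\<lambda>k. sqrt (integral\<^sup>L M (\<lambda>w. (Xk k w - X w)^2))) \<longlonglongrightarrow> 0 \<and> (\<forall>k. MAXVAR n M (Xk k) \<le> 0)"
    for X and Xk :: "nat \<Rightarrow> 'a \<Rightarrow> real"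
    using that by (intro MAXVAR_nonpos_if_L2_limit[OF n, of X Xk]) auto
  show "MAXVAR n M (\<lambda>w. l * X w) = l * MAXVAR n M X" if "X \<in> L2 M" "0 < l" for X and l :: real
    using that L2 by (intro MAXVAR_mult[OF n]) auto
  show "integral\<^sup>L M X < MAXVAR n M X" if "X \<in> L2 M" "\<nexists>c. AE w in M. X w = c" for X
    using that L2 by (intro MAXVAR_gt_expectation[OF assms(2)]) auto
qed

end
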